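(* Let $\mathcal{C}$ be a d-category and let $\omega,\psi$ be paths in $\mathcal{C}$ with $\omega\simeq\psi$. Then the track objects $\widehat\omega$ and $\widehat\psi$ are isomorphic as $\mathcal{C}$-automata.
   Context: A d-category is a small category $\mathcal{C}$ with wide subcategories $\mathcal{C}^+$ (formorphisms) and $\mathcal{C}^-$ (backmorphisms) such that an invertible $\varphi$ is in $\mathcal{C}^+$ iff $\varphi^{-1}\in\mathcal{C}^-$. A linear category is a bipointed d-category isomorphic to a finite (possibly empty) concatenation (gluing $\top$ of one to $\bot$ of the next) of $\mathbf S$ (one formorphism $\bot\to\top$), $\mathbf T$ (one backmorphism $\top\to\bot$), $\mathbf I$ (mutually inverse formorphism $\bot\to\top$ and backmorphism $\top\to\bot$). A path in $\mathcal{C}$ is a d-functor $\omega:\mathcal I\to\mathcal{C}$ from a linear category. Write $\omega\preceq\psi$ if there is a basepoint-preserving d-functor $F$ between their domains with $\psi\circ F=\omega$; $\simeq$ is the equivalence relation generated by $\preceq$. A $\mathcal{C}$-automaton is a presheaf $X:\mathcal{C}^{op}\to\mathbf{Set}$ with sets of start and accept elements; morphisms are presheaf maps preserving them. The track object of $\omega:\mathcal I\to\mathcal{C}$ is the automaton $\widehat\omega=\operatorname{colim}_{i\in\mathcal I}\mathcal{C}(-,\omega(i))$ with single start element the image of $\mathrm{id}_{\omega(\bot)}$ and single accept element the image of $\mathrm{id}_{\omega(\top)}$. *)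

theory Defs
  imports Main
begin

text \<open>Comp C g f is the composite "g after f" (defined when Cod f = Dom g).\<close>
record ('o, 'm) cat =
  Obj  :: "'o set"
  Mor  :: "'m set"
  Dom  :: "'m \<Rightarrow> 'o"
  Cod  :: "'m \<Rightarrow> 'o"
  Id   :: "'o \<Rightarrow> 'm"
  Comp :: "'m \<Rightarrow> 'm \<Rightarrow> 'm"

definition hom :: "('o, 'm, 'z) cat_scheme \<Rightarrow> 'o \<Rightarrow> 'o \<Rightarrow> 'm set" where
  "hom C a b = {f \<in> Mor C. Dom C f = a \<and> Cod C f = b}"

definition category :: "('o, 'm, 'z) cat_scheme \<Rightarrow> bool" where
  "category C \<longleftrightarrow>
     (\<forall>f\<in>Mor C. Dom C f \<in> Obj C \<and> Cod C f \<in> Obj C) \<and>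
     (\<forall>a\<in>Obj C. Id C a \<in> hom C a a) \<and>
     (\<forall>f\<in>Mor C. \<forall>g\<in>Mor C. Cod C f = Dom C g \<longrightarrow> Comp C g f \<in> hom C (Dom C f) (Cod C g)) \<and>
     (\<forall>f\<in>Mor C. Comp C (Id C (Cod C f)) f = f \<and> Comp C f (Id C (Dom C f)) = f) \<and>
     (\<forall>f\<in>Mor C. \<forall>g\<in>Mor C. \<forall>h\<in>Mor C. Cod C f = Dom C g \<longrightarrow> Cod C g = Dom C h \<longrightarrow>
        Comp C h (Comp C g f) = Comp C (Comp C h g) f)"

definition is_inverse :: "('o, 'm, 'z) cat_scheme \<Rightarrow> 'm \<Rightarrow> 'm \<Rightarrow> bool" where
  "is_inverse C f g \<longleftrightarrow> f \<in> Mor C \<and> g \<in> Mor C \<and> Dom C g = Cod C f \<and> Cod C g = Dom C f \<and>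
     Comp C g f = Id C (Dom C f) \<and> Comp C f g = Id C (Cod C f)"

definition wide_subcat :: "('o, 'm, 'z) cat_scheme \<Rightarrow> 'm set \<Rightarrow> bool" where
  "wide_subcat C S \<longleftrightarrow> S \<subseteq> Mor C \<and> (\<forall>a\<in>Obj C. Id C a \<in> S) \<and>
     (\<forall>f\<in>S. \<forall>g\<in>S. Cod C f = Dom C g \<longrightarrow> Comp C g f \<in> S)"

definition "functor" ::
  "('o, 'm, 'z) cat_scheme \<Rightarrow> ('p, 'n, 'y) cat_scheme \<Rightarrow> ('o \<Rightarrow> 'p) \<Rightarrow> ('m \<Rightarrow> 'n) \<Rightarrow> bool" where
  "functor C D Fo Fm \<longleftrightarrow>
     (\<forall>a\<in>Obj C. Fo a \<in> Obj D) \<and>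
     (\<forall>f\<in>Mor C. Fm f \<in> hom D (Fo (Dom C f)) (Fo (Cod C f))) \<and>
     (\<forall>a\<in>Obj C. Fm (Id C a) = Id D (Fo a)) \<and>
     (\<forall>f\<in>Mor C. \<forall>g\<in>Mor C. Cod C f = Dom C g \<longrightarrow> Fm (Comp C g f) = Comp D (Fm g) (Fm f))"

record ('o, 'm) dcat = "('o, 'm) cat" +
  Fwd :: "'m set"
  Bwd :: "'m set"

definition dcategory :: "('o, 'm, 'z) dcat_scheme \<Rightarrow> bool" where
  "dcategory C \<longleftrightarrow> category C \<and> wide_subcat C (Fwd C) \<and> wide_subcat C (Bwd C) \<and>
     (\<forall>f g. is_inverse C f g \<longrightarrow> (f \<in> Fwd C \<longleftrightarrow> g \<in> Bwd C))"

definition dfunctor ::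
  "('o, 'm, 'z) dcat_scheme \<Rightarrow> ('p, 'n, 'y) dcat_scheme \<Rightarrow> ('o \<Rightarrow> 'p) \<Rightarrow> ('m \<Rightarrow> 'n) \<Rightarrow> bool" where
  "dfunctor C D Fo Fm \<longleftrightarrow> functor C D Fo Fm \<and> Fm ` Fwd C \<subseteq> Fwd D \<and> Fm ` Bwd C \<subseteq> Bwd D"

text \<open>Building blocks: SegS = S (one formorphism bot -> top), SegT = T (one backmorphism
 top -> bot), SegI = I (mutually inverse formorphism bot -> top and backmorphism top -> bot).
 The concatenation of a word ws of length n has objects 0..n (bot = 0, top = n, the k-th
 block glued between k and k+1).  Computing the glued (pushout) d-category explicitly:
 it is thin, with a (unique) morphism i -> j iff all blocks between i and j point the
 right way; morphisms i -> j with i <= j are formorphisms, those with j <= i backmorphisms.\<close>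

datatype seg = SegS | SegT | SegI

definition larr :: "seg list \<Rightarrow> nat \<Rightarrow> nat \<Rightarrow> bool" where
  "larr ws i j \<longleftrightarrow> i \<le> length ws \<and> j \<le> length ws \<and>
     (\<forall>k. i \<le> k \<and> k < j \<longrightarrow> ws ! k \<noteq> SegT) \<and>
     (\<forall>k. j \<le> k \<and> k < i \<longrightarrow> ws ! k \<noteq> SegS)"

definition lin :: "seg list \<Rightarrow> (nat, nat \<times> nat) dcat" where
  "lin ws = \<lparr> Obj = {0..length ws},
             Mor = {(i, j). larr ws i j},
             Dom = fst, Cod = snd,
             Id = (\<lambda>i. (i, i)),
             Comp = (\<lambda>g f. (fst f, snd g)),
             Fwd = {(i, j). larr ws i j \<and> i \<le> j},
             Bwd = {(i, j). larr ws i j \<and> j \<le> i} \<rparr>"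

text \<open>A path: a linear category (given by its word) together with a d-functor into C
 (object map and morphism map).  Bottom is 0, top is length ws.\<close>
type_synonym ('o, 'm) path = "seg list \<times> (nat \<Rightarrow> 'o) \<times> (nat \<times> nat \<Rightarrow> 'm)"

definition pword :: "('o, 'm) path \<Rightarrow> seg list" where "pword p = fst p"
definition pobj :: "('o, 'm) path \<Rightarrow> nat \<Rightarrow> 'o" where "pobj p = fst (snd p)"
definition pmor :: "('o, 'm) path \<Rightarrow> nat \<times> nat \<Rightarrow> 'm" where "pmor p = snd (snd p)"

definition is_path :: "('o, 'm, 'z) dcat_scheme \<Rightarrow> ('o, 'm) path \<Rightarrow> bool" where
  "is_path C p \<longleftrightarrow> dfunctor (lin (pword p)) C (pobj p) (pmor p)"

definition path_le :: "('o, 'm, 'z) dcat_scheme \<Rightarrow> ('o, 'm) path \<Rightarrow> ('o, 'm) path \<Rightarrow> bool" where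
  "path_le C p q \<longleftrightarrow> is_path C p \<and> is_path C q \<and>
     (\<exists>Fo Fm. dfunctor (lin (pword p)) (lin (pword q)) Fo Fm \<and>
        Fo 0 = 0 \<and> Fo (length (pword p)) = length (pword q) \<and>
        (\<forall>x\<in>Obj (lin (pword p)). pobj q (Fo x) = pobj p x) \<and>
        (\<forall>u\<in>Mor (lin (pword p)). pmor q (Fm u) = pmor p u))"

definition path_equiv :: "('o, 'm, 'z) dcat_scheme \<Rightarrow> ('o, 'm) path \<Rightarrow> ('o, 'm) path \<Rightarrow> bool" where
  "path_equiv C = equivclp (path_le C)"

text \<open>A presheaf X on C: sets Elt X c and right action Act X f : X(Cod f) -> X(Dom f).
 Start/accept elements are elements of the presheaf, tagged with their object.\<close>
record ('o, 'm, 'x) automaton =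
  Elt    :: "'o \<Rightarrow> 'x set"
  Act    :: "'m \<Rightarrow> 'x \<Rightarrow> 'x"
  Start  :: "('o \<times> 'x) set"
  Accept :: "('o \<times> 'x) set"

definition is_automaton :: "('o, 'm, 'z) cat_scheme \<Rightarrow> ('o, 'm, 'x) automaton \<Rightarrow> bool" where
  "is_automaton C X \<longleftrightarrow>
     (\<forall>f\<in>Mor C. \<forall>x\<in>Elt X (Cod C f). Act X f x \<in> Elt X (Dom C f)) \<and>
     (\<forall>a\<in>Obj C. \<forall>x\<in>Elt X a. Act X (Id C a) x = x) \<and>
     (\<forall>f\<in>Mor C. \<forall>g\<in>Mor C. Cod C f = Dom C g \<longrightarrow>
        (\<forall>x\<in>Elt X (Cod C g). Act X (Comp C g f) x = Act X f (Act X g x))) \<and>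
     Start X \<subseteq> {(a, x). a \<in> Obj C \<and> x \<in> Elt X a} \<and>
     Accept X \<subseteq> {(a, x). a \<in> Obj C \<and> x \<in> Elt X a}"

definition aut_hom :: "('o, 'm, 'z) cat_scheme \<Rightarrow> ('o, 'm, 'x) automaton \<Rightarrow> ('o, 'm, 'y) automaton
     \<Rightarrow> ('o \<Rightarrow> 'x \<Rightarrow> 'y) \<Rightarrow> bool" where
  "aut_hom C X Y \<eta> \<longleftrightarrow>
     (\<forall>a\<in>Obj C. \<forall>x\<in>Elt X a. \<eta> a x \<in> Elt Y a) \<and>
     (\<forall>f\<in>Mor C. \<forall>x\<in>Elt X (Cod C f). \<eta> (Dom C f) (Act X f x) = Act Y f (\<eta> (Cod C f) x)) \<and>
     (\<forall>(a, x)\<in>Start X. (a, \<eta> a x) \<in> Start Y) \<and>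
     (\<forall>(a, x)\<in>Accept X. (a, \<eta> a x) \<in> Accept Y)"

definition aut_iso :: "('o, 'm, 'z) cat_scheme \<Rightarrow> ('o, 'm, 'x) automaton \<Rightarrow> ('o, 'm, 'y) automaton \<Rightarrow> bool" where
  "aut_iso C X Y \<longleftrightarrow> (\<exists>\<eta> \<theta>. aut_hom C X Y \<eta> \<and> aut_hom C Y X \<theta> \<and>
     (\<forall>a\<in>Obj C. \<forall>x\<in>Elt X a. \<theta> a (\<eta> a x) = x) \<and>
     (\<forall>a\<in>Obj C. \<forall>y\<in>Elt Y a. \<eta> a (\<theta> a y) = y))"

text \<open>The colimit of representables colim_i C(-, \<omega> i), computed objectwise in Set:
 at object c it is the quotient of the disjoint union of the C(c, \<omega> i) (pairs (i, h))
 by the equivalence relation generated by (i, h) ~ (j, \<omega>(u) \<circ> h) for u : i -> j.\<close>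

definition track_carrier :: "('o, 'm, 'z) cat_scheme \<Rightarrow> ('o, 'm) path \<Rightarrow> 'o \<Rightarrow> (nat \<times> 'm) set" where
  "track_carrier C p c = {(i, h). i \<in> Obj (lin (pword p)) \<and> h \<in> hom C c (pobj p i)}"

definition track_step :: "('o, 'm, 'z) cat_scheme \<Rightarrow> ('o, 'm) path \<Rightarrow> 'o \<Rightarrow> ((nat \<times> 'm) \<times> (nat \<times> 'm)) set" where
  "track_step C p c = {((i, h), (j, Comp C (pmor p u) h)) | i j h u.
      (i, h) \<in> track_carrier C p c \<and> u \<in> Mor (lin (pword p)) \<and>
      Dom (lin (pword p)) u = i \<and> Cod (lin (pword p)) u = j}"

definition track_rel :: "('o, 'm, 'z) cat_scheme \<Rightarrow> ('o, 'm) path \<Rightarrow> 'o \<Rightarrow> ((nat \<times> 'm) \<times> (nat \<times> 'm)) set" where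
  "track_rel C p c = (track_step C p c \<union> (track_step C p c)\<inverse>)\<^sup>*"

definition track :: "('o, 'm, 'z) cat_scheme \<Rightarrow> ('o, 'm) path \<Rightarrow> ('o, 'm, (nat \<times> 'm) set) automaton" where
  "track C p = \<lparr>
     Elt = (\<lambda>c. if c \<in> Obj C then track_carrier C p c // track_rel C p c else {}),
     Act = (\<lambda>f X. track_rel C p (Dom C f) `` ((\<lambda>(i, h). (i, Comp C h f)) ` X)),
     Start = {(pobj p 0, track_rel C p (pobj p 0) `` {(0, Id C (pobj p 0))})},
     Accept = {(pobj p (length (pword p)),
                track_rel C p (pobj p (length (pword p))) ``
                  {(length (pword p), Id C (pobj p (length (pword p))))})} \<rparr>"

end

theory Submission
  imports Defs
begin

text \<open>Let \<omega> \<preceq> \<psi> be witnessed by F : I \<rightarrow> J.  Since F preserves formorphisms and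
backmorphisms, it is monotone on objects; as it also fixes both endpoints, every object j of J
has an arrow j \<rightarrow> F(i) for some i.  The map [i, h] \<mapsto> [F(i), h] of track objects then
has the inverse [j, h] \<mapsto> [i, \<psi>(j \<rightarrow> F(i)) \<circ> h].  This does not depend on the
choice of i: by monotonicity every index between two admissible ones is admissible, and
neighbouring admissible indices k, k + 1 give elements identified along the generator of I
between them.  Isomorphism of automata being an equivalence relation, the result passes from
\<preceq> to \<simeq>.\<close>

lemma aut_iso_refl: "aut_iso C X X"
  unfolding aut_iso_def aut_hom_def by (rule exI[of _ "\<lambda>a x. x"])+ auto

lemma aut_iso_sym: "aut_iso C X Y \<Longrightarrow> aut_iso C Y X"
  unfolding aut_iso_def by blast

lemma aut_hom_comp:
  assumes "category C" "aut_hom C X Y \<eta>" "aut_hom C Y Z \<eta>'"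
  shows "aut_hom C X Z (\<lambda>a x. \<eta>' a (\<eta> a x))"
proof -
  have "\<forall>f\<in>Mor C. Cod C f \<in> Obj C" using assms(1) unfolding category_def by simp
  with assms(2,3) show ?thesis unfolding aut_hom_def by auto
qed

lemma aut_iso_trans:
  assumes cat: "category C" and "aut_iso C X Y" and "aut_iso C Y Z"
  shows "aut_iso C X Z"
proof -
  obtain \<eta> \<theta> where \<eta>: "aut_hom C X Y \<eta>" "aut_hom C Y X \<theta>"
    "\<forall>a\<in>Obj C. \<forall>x\<in>Elt X a. \<theta> a (\<eta> a x) = x" "\<forall>a\<in>Obj C. \<forall>y\<in>Elt Y a. \<eta> a (\<theta> a y) = y"
    using assms(2) unfolding aut_iso_def by blast
  obtain \<eta>' \<theta>' where \<eta>': "aut_hom C Y Z \<eta>'" "aut_hom C Z Y \<theta>'"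
    "\<forall>a\<in>Obj C. \<forall>x\<in>Elt Y a. \<theta>' a (\<eta>' a x) = x" "\<forall>a\<in>Obj C. \<forall>y\<in>Elt Z a. \<eta>' a (\<theta>' a y) = y"
    using assms(3) unfolding aut_iso_def by blast
  have "\<forall>a\<in>Obj C. \<forall>x\<in>Elt X a. \<eta> a x \<in> Elt Y a"
    using \<eta>(1) unfolding aut_hom_def by blast
  moreover have "\<forall>a\<in>Obj C. \<forall>z\<in>Elt Z a. \<theta>' a z \<in> Elt Y a"
    using \<eta>'(2) unfolding aut_hom_def by blast
  ultimately have "\<forall>a\<in>Obj C. \<forall>x\<in>Elt X a. \<theta> a (\<theta>' a (\<eta>' a (\<eta> a x))) = x"
    and "\<forall>a\<in>Obj C. \<forall>z\<in>Elt Z a. \<eta>' a (\<eta> a (\<theta> a (\<theta>' a z))) = z"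
    using \<eta>(3,4) \<eta>'(3,4) by simp_all
  then show ?thesis
    unfolding aut_iso_def using aut_hom_comp[OF cat \<eta>(1) \<eta>'(1)] aut_hom_comp[OF cat \<eta>'(2) \<eta>(2)]
    by blast
qed

lemma equiv_rtrancl_symcl: "equiv UNIV ((S \<union> S\<inverse>)\<^sup>*)"
  by (simp add: equiv_def refl_rtrancl sym_rtrancl sym_Un_converse trans_rtrancl)

lemma rtrancl_symcl_into_equiv:
  assumes R: "equiv UNIV R" and S: "\<And>a b. (a, b) \<in> S \<Longrightarrow> (G a, G b) \<in> R"
    and xy: "(x, y) \<in> (S \<union> S\<inverse>)\<^sup>*"
  shows "(G x, G y) \<in> R"
  using xy
proof (induction rule: rtrancl_induct)
  case base
  show ?case using R by (simp add: equiv_def refl_on_def)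
next
  case (step y z)
  then have "(G y, G z) \<in> R" using R S by (metis UnE converseD equivE symD)
  with step.IH show ?case using R by (auto elim: equivE dest: transD)
qed

lemma Image_image_rtrancl_symcl_class:
  assumes R: "equiv UNIV R" and S: "\<And>a b. (a, b) \<in> S \<Longrightarrow> (G a, G b) \<in> R"
  shows "R `` (G ` ((S \<union> S\<inverse>)\<^sup>* `` {x})) = R `` {G x}"
proof -
  have "R `` {G y} = R `` {G x}" if "(x, y) \<in> (S \<union> S\<inverse>)\<^sup>*" for y
    using R S that by (metis equiv_class_eq rtrancl_symcl_into_equiv)
  then show ?thesis by blast
qed

lemma cat_id_in_hom: "category C \<Longrightarrow> a \<in> Obj C \<Longrightarrow> Id C a \<in> hom C a a"
  unfolding category_def by simp

lemma cat_comp_in_hom: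
  "category C \<Longrightarrow> f \<in> hom C a b \<Longrightarrow> g \<in> hom C b c \<Longrightarrow> Comp C g f \<in> hom C a c"
  unfolding category_def hom_def by auto

lemma cat_comp_assoc:
  "category C \<Longrightarrow> f \<in> hom C a b \<Longrightarrow> g \<in> hom C b c \<Longrightarrow> h \<in> hom C c d \<Longrightarrow>
    Comp C h (Comp C g f) = Comp C (Comp C h g) f"
  unfolding category_def hom_def by auto

lemma cat_id_left: "category C \<Longrightarrow> f \<in> hom C a b \<Longrightarrow> Comp C (Id C b) f = f"
  unfolding category_def hom_def by auto

lemma lin_simps [simp]:
  "Obj (lin ws) = {0..length ws}" "Mor (lin ws) = {(i, j). larr ws i j}"
  "Dom (lin ws) = fst" "Cod (lin ws) = snd" "Id (lin ws) = (\<lambda>i. (i, i))"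
  "Comp (lin ws) = (\<lambda>g f. (fst f, snd g))"
  "Fwd (lin ws) = {(i, j). larr ws i j \<and> i \<le> j}"
  "Bwd (lin ws) = {(i, j). larr ws i j \<and> j \<le> i}"
  by (simp_all add: lin_def)

lemma larr_refl: "i \<le> length ws \<Longrightarrow> larr ws i i"
  unfolding larr_def by auto

lemma larr_le_length: "larr ws i j \<Longrightarrow> i \<le> length ws \<and> j \<le> length ws"
  unfolding larr_def by auto

lemma larr_trans: "larr ws a b \<Longrightarrow> larr ws b c \<Longrightarrow> larr ws a c"
  unfolding larr_def by (metis not_le)

lemma larr_between: "larr ws a x \<Longrightarrow> larr ws a y \<Longrightarrow> x \<le> z \<Longrightarrow> z \<le> y \<Longrightarrow> larr ws a z"
  unfolding larr_def by auto

lemma larr_suffix: "larr ws a b \<Longrightarrow> a \<le> j \<and> j \<le> b \<or> b \<le> j \<and> j \<le> a \<Longrightarrow> larr ws j b"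
  unfolding larr_def by auto

lemma larr_adjacent_cases:
  assumes "k < length ws"
  obtains (fwd) "larr ws k (Suc k)" | (bwd) "larr ws (Suc k) k"
proof (cases "ws ! k = SegT")
  case True
  then have "larr ws (Suc k) k"
    using assms unfolding larr_def by (auto simp: less_Suc_eq_le le_antisym)
  then show ?thesis by (rule bwd)
next
  case False
  then have "larr ws k (Suc k)"
    using assms unfolding larr_def by (auto simp: less_Suc_eq_le le_antisym)
  then show ?thesis by (rule fwd)
qed

lemma path_obj: "is_path C p \<Longrightarrow> i \<le> length (pword p) \<Longrightarrow> pobj p i \<in> Obj C"
  unfolding is_path_def dfunctor_def functor_def by simp

lemma path_mor: "is_path C p \<Longrightarrow> larr (pword p) i j \<Longrightarrow> pmor p (i, j) \<in> hom C (pobj p i) (pobj p j)"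
  unfolding is_path_def dfunctor_def functor_def by auto

lemma path_id: "is_path C p \<Longrightarrow> i \<le> length (pword p) \<Longrightarrow> pmor p (i, i) = Id C (pobj p i)"
  unfolding is_path_def dfunctor_def functor_def by simp

lemma path_comp:
  assumes "is_path C p" "larr (pword p) a b" "larr (pword p) b c"
  shows "Comp C (pmor p (b, c)) (pmor p (a, b)) = pmor p (a, c)"
  using assms unfolding is_path_def dfunctor_def functor_def by fastforce

lemma path_comp_assoc:
  assumes "category C" "is_path C p" "larr (pword p) a b" "larr (pword p) b c"
    and "h \<in> hom C x (pobj p a)"
  shows "Comp C (pmor p (b, c)) (Comp C (pmor p (a, b)) h) = Comp C (pmor p (a, c)) h"
  using cat_comp_assoc[OF assms(1,5) path_mor[OF assms(2,3)] path_mor[OF assms(2,4)]]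
    path_comp[OF assms(2-4)] by simp

lemma track_carrier_iff [simp]:
  "(i, h) \<in> track_carrier C p c \<longleftrightarrow> i \<le> length (pword p) \<and> h \<in> hom C c (pobj p i)"
  unfolding track_carrier_def by simp

lemma track_stepI:
  "(i, h) \<in> track_carrier C p c \<Longrightarrow> larr (pword p) i j \<Longrightarrow>
    ((i, h), (j, Comp C (pmor p (i, j)) h)) \<in> track_step C p c"
  unfolding track_step_def by force

lemma track_stepE:
  assumes "(x, y) \<in> track_step C p c"
  obtains i j h where "x = (i, h)" "y = (j, Comp C (pmor p (i, j)) h)"
    "(i, h) \<in> track_carrier C p c" "larr (pword p) i j"
  using assms unfolding track_step_def by force

lemma equiv_track_rel: "equiv UNIV (track_rel C p c)"
  unfolding track_rel_def by (rule equiv_rtrancl_symcl)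

lemma track_rel_sym: "(x, y) \<in> track_rel C p c \<Longrightarrow> (y, x) \<in> track_rel C p c"
  using equiv_track_rel by (metis equivE symD)

lemma track_rel_trans:
  "(x, y) \<in> track_rel C p c \<Longrightarrow> (y, z) \<in> track_rel C p c \<Longrightarrow> (x, z) \<in> track_rel C p c"
  using equiv_track_rel by (metis equivE transD)

lemma track_step_in_rel: "(x, y) \<in> track_step C p c \<Longrightarrow> (x, y) \<in> track_rel C p c"
  unfolding track_rel_def by blast

lemma Elt_trackE:
  assumes "X \<in> Elt (track C p) c"
  obtains x where "c \<in> Obj C" "x \<in> track_carrier C p c" "X = track_rel C p c `` {x}"
  using assms unfolding track_def by (auto elim: quotientE split: if_splits)

lemma Elt_trackI:
  "c \<in> Obj C \<Longrightarrow> x \<in> track_carrier C p c \<Longrightarrow> track_rel C p c `` {x} \<in> Elt (track C p) c"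
  unfolding track_def by (simp add: quotientI)

lemma Start_track:
  "Start (track C p) = {(pobj p 0, track_rel C p (pobj p 0) `` {(0, Id C (pobj p 0))})}"
  unfolding track_def by simp

lemma Accept_track:
  "Accept (track C p) = {(pobj p (length (pword p)), track_rel C p (pobj p (length (pword p))) ``
     {(length (pword p), Id C (pobj p (length (pword p))))})}"
  unfolding track_def by simp

definition track_map ::
  "('o, 'm, 'z) cat_scheme \<Rightarrow> ('o, 'm) path \<Rightarrow> (nat \<times> 'm \<Rightarrow> nat \<times> 'm) \<Rightarrow> 'o \<Rightarrow>
     (nat \<times> 'm) set \<Rightarrow> (nat \<times> 'm) set" where
  "track_map C q G c X = track_rel C q c `` (G ` X)"

lemma track_map_class:
  assumes "\<And>x y. (x, y) \<in> track_step C p c \<Longrightarrow> (G x, G y) \<in> track_rel C q d"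
  shows "track_map C q G d (track_rel C p c `` {x}) = track_rel C q d `` {G x}"
  using assms unfolding track_map_def track_rel_def
  by (rule Image_image_rtrancl_symcl_class[OF equiv_rtrancl_symcl])

definition precomp :: "('o, 'm, 'z) cat_scheme \<Rightarrow> 'm \<Rightarrow> nat \<times> 'm \<Rightarrow> nat \<times> 'm" where
  "precomp C f = (\<lambda>(i, h). (i, Comp C h f))"

lemma Act_track: "Act (track C p) f = track_map C p (precomp C f) (Dom C f)"
  unfolding track_def track_map_def precomp_def by (simp add: fun_eq_iff)

lemma precomp_step:
  assumes cat: "category C" and p: "is_path C p" and f: "f \<in> Mor C"
    and xy: "(x, y) \<in> track_step C p (Cod C f)"
  shows "(precomp C f x, precomp C f y) \<in> track_step C p (Dom C f)"
proof -
  obtain i j h where x: "x = (i, h)" and y: "y = (j, Comp C (pmor p (i, j)) h)"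
    and ih: "(i, h) \<in> track_carrier C p (Cod C f)" and ij: "larr (pword p) i j"
    using xy by (rule track_stepE)
  have f': "f \<in> hom C (Dom C f) (Cod C f)" and h: "h \<in> hom C (Cod C f) (pobj p i)"
    using f ih by (simp_all add: hom_def)
  have "(i, Comp C h f) \<in> track_carrier C p (Dom C f)"
    using ih cat_comp_in_hom[OF cat f' h] by simp
  moreover have "Comp C (Comp C (pmor p (i, j)) h) f = Comp C (pmor p (i, j)) (Comp C h f)"
    using cat_comp_assoc[OF cat f' h path_mor[OF p ij]] by simp
  ultimately show ?thesis
    using track_stepI[of i "Comp C h f" C p "Dom C f" j] ij x y by (simp add: precomp_def)
qed

lemma Act_track_class:
  assumes "category C" "is_path C p" "f \<in> Mor C"
  shows "Act (track C p) f (track_rel C p (Cod C f) `` {x}) = track_rel C p (Dom C f) `` {precomp C f x}"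
  unfolding Act_track using assms by (intro track_map_class track_step_in_rel precomp_step)

lemma aut_hom_track_map:
  assumes cat: "category C" and p: "is_path C p" and q: "is_path C q"
    and carrier: "\<And>c x. x \<in> track_carrier C p c \<Longrightarrow> G x \<in> track_carrier C q c"
    and step: "\<And>c x y. (x, y) \<in> track_step C p c \<Longrightarrow> (G x, G y) \<in> track_rel C q c"
    and precomp: "\<And>f x. f \<in> Mor C \<Longrightarrow> x \<in> track_carrier C p (Cod C f) \<Longrightarrow>
      G (precomp C f x) = precomp C f (G x)"
    and bot: "pobj q 0 = pobj p 0"
      "(G (0, Id C (pobj p 0)), (0, Id C (pobj p 0))) \<in> track_rel C q (pobj p 0)"
    and top: "pobj q (length (pword q)) = pobj p (length (pword p))"
      "(G (length (pword p), Id C (pobj p (length (pword p)))),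
        (length (pword q), Id C (pobj p (length (pword p))))) \<in> track_rel C q (pobj p (length (pword p)))"
  shows "aut_hom C (track C p) (track C q) (track_map C q G)"
  unfolding aut_hom_def
proof (intro conjI ballI)
  fix a X assume "a \<in> Obj C" "X \<in> Elt (track C p) a"
  then show "track_map C q G a X \<in> Elt (track C q) a"
    by (auto elim!: Elt_trackE simp: track_map_class step intro!: Elt_trackI carrier)
next
  fix f X assume f: "f \<in> Mor C" and "X \<in> Elt (track C p) (Cod C f)"
  then obtain x where "x \<in> track_carrier C p (Cod C f)" "X = track_rel C p (Cod C f) `` {x}"
    by (auto elim: Elt_trackE)
  then show "track_map C q G (Dom C f) (Act (track C p) f X) = Act (track C q) f (track_map C q G (Cod C f) X)"
    by (simp add: Act_track_class[OF cat p f] Act_track_class[OF cat q f] track_map_class step precomp[OF f])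
next
  fix aX assume "aX \<in> Start (track C p)"
  then show "case aX of (a, X) \<Rightarrow> (a, track_map C q G a X) \<in> Start (track C q)"
    using bot by (simp add: Start_track track_map_class step equiv_class_eq[OF equiv_track_rel])
next
  fix aX assume "aX \<in> Accept (track C p)"
  then show "case aX of (a, X) \<Rightarrow> (a, track_map C q G a X) \<in> Accept (track C q)"
    using top by (simp add: Accept_track track_map_class step equiv_class_eq[OF equiv_track_rel])
qed

lemma aut_iso_track_mapI:
  assumes "aut_hom C (track C p) (track C q) (track_map C q G)"
    and "aut_hom C (track C q) (track C p) (track_map C p H)"
    and G: "\<And>c x y. (x, y) \<in> track_step C p c \<Longrightarrow> (G x, G y) \<in> track_rel C q c"
    and H: "\<And>c x y. (x, y) \<in> track_step C q c \<Longrightarrow> (H x, H y) \<in> track_rel C p c"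
    and HG: "\<And>c x. x \<in> track_carrier C p c \<Longrightarrow> (H (G x), x) \<in> track_rel C p c"
    and GH: "\<And>c y. y \<in> track_carrier C q c \<Longrightarrow> (G (H y), y) \<in> track_rel C q c"
  shows "aut_iso C (track C p) (track C q)"
  unfolding aut_iso_def
proof (rule exI[of _ "track_map C q G"], rule exI[of _ "track_map C p H"], intro conjI ballI)
  fix a X assume "a \<in> Obj C" "X \<in> Elt (track C p) a"
  then obtain x where x: "x \<in> track_carrier C p a" "X = track_rel C p a `` {x}"
    by (auto elim: Elt_trackE)
  then show "track_map C p H a (track_map C q G a X) = X"
    using equiv_class_eq[OF equiv_track_rel HG[OF x(1)]] by (simp add: track_map_class G H)
next
  fix a Y assume "a \<in> Obj C" "Y \<in> Elt (track C q) a"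
  then obtain y where y: "y \<in> track_carrier C q a" "Y = track_rel C q a `` {y}"
    by (auto elim: Elt_trackE)
  then show "track_map C q G a (track_map C p H a Y) = Y"
    using equiv_class_eq[OF equiv_track_rel GH[OF y(1)]] by (simp add: track_map_class G H)
qed (fact assms)+

locale path_le_witness =
  fixes C :: "('o, 'm, 'z) dcat_scheme" and p q :: "('o, 'm) path"
    and Fo :: "nat \<Rightarrow> nat" and Fm :: "nat \<times> nat \<Rightarrow> nat \<times> nat"
  assumes cat: "category C" and p: "is_path C p" and q: "is_path C q"
    and F: "dfunctor (lin (pword p)) (lin (pword q)) Fo Fm"
    and F_bot: "Fo 0 = 0" and F_top: "Fo (length (pword p)) = length (pword q)"
    and F_obj: "\<forall>x\<in>Obj (lin (pword p)). pobj q (Fo x) = pobj p x"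
    and F_mor: "\<forall>u\<in>Mor (lin (pword p)). pmor q (Fm u) = pmor p u"
begin

abbreviation "n \<equiv> length (pword p)"
abbreviation "m \<equiv> length (pword q)"

lemma Fm_eq: "larr (pword p) i j \<Longrightarrow> Fm (i, j) = (Fo i, Fo j) \<and> larr (pword q) (Fo i) (Fo j)"
proof -
  assume "larr (pword p) i j"
  then have "Fm (i, j) \<in> hom (lin (pword q)) (Fo i) (Fo j)"
    using F unfolding dfunctor_def functor_def by simp
  then show ?thesis unfolding hom_def by auto
qed

lemma larr_Fo: "larr (pword p) i j \<Longrightarrow> larr (pword q) (Fo i) (Fo j)"
  using Fm_eq by blast

lemma pmor_Fo: "larr (pword p) i j \<Longrightarrow> pmor q (Fo i, Fo j) = pmor p (i, j)"
  using F_mor Fm_eq by force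

lemma pobj_Fo: "i \<le> n \<Longrightarrow> pobj q (Fo i) = pobj p i"
  using F_obj by simp

lemma pobj_bot: "pobj q 0 = pobj p 0"
  using pobj_Fo[of 0] F_bot by simp

lemma pobj_top: "pobj q m = pobj p n"
  using pobj_Fo[of n] F_top by simp

lemma Fo_le_length: "i \<le> n \<Longrightarrow> Fo i \<le> m"
  using larr_le_length[OF larr_Fo[OF larr_refl]] by blast

text \<open>This is where F is used as a d-functor rather than a mere functor.\<close>
lemma Fo_mono: "i \<le> j \<Longrightarrow> j \<le> n \<Longrightarrow> Fo i \<le> Fo j"
proof (induction j rule: dec_induct)
  case base
  show ?case by simp
next
  case (step k)
  from step.prems have "k < n" by simp
  then have "Fo k \<le> Fo (Suc k)"
  proof (cases rule: larr_adjacent_cases)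
    case fwd
    then have "(k, Suc k) \<in> Fwd (lin (pword p))" by simp
    then have "Fm (k, Suc k) \<in> Fwd (lin (pword q))" using F unfolding dfunctor_def by blast
    with Fm_eq[OF fwd] show ?thesis by simp
  next
    case bwd
    then have "(Suc k, k) \<in> Bwd (lin (pword p))" by simp
    then have "Fm (Suc k, k) \<in> Bwd (lin (pword q))" using F unfolding dfunctor_def by blast
    with Fm_eq[OF bwd] show ?thesis by simp
  qed
  with step show ?case by simp
qed

lemma ex_larr_to_image: "j \<le> m \<Longrightarrow> \<exists>i\<le>n. larr (pword q) j (Fo i)"
proof -
  assume j: "j \<le> m"
  define K where "K = {k. k \<le> n \<and> Fo k \<le> j}"
  have "finite K" "0 \<in> K" unfolding K_def using F_bot by simp_all
  then have "Max K \<in> K" and k_max: "\<And>k. k \<in> K \<Longrightarrow> k \<le> Max K"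
    using Max_in by auto
  then have k: "Max K \<le> n" "Fo (Max K) \<le> j" unfolding K_def by simp_all
  show ?thesis
  proof (cases "Max K = n")
    case True
    with k(2) F_top j have "Fo n = j" by simp
    with larr_refl[OF j] show ?thesis by auto
  next
    case False
    with k have kn: "Max K < n" by simp
    have "Suc (Max K) \<notin> K" using k_max Suc_n_not_le_n by blast
    with kn have "j < Fo (Suc (Max K))" unfolding K_def by auto
    \<comment> \<open>F maps the generator of I between k = Max K and k + 1 to an arrow between
      F(k) \<le> j < F(k + 1); it restricts to an arrow out of j.\<close>
    from kn show ?thesis
    proof (cases rule: larr_adjacent_cases)
      case fwd
      then have "larr (pword q) j (Fo (Suc (Max K)))"
        using larr_suffix[OF larr_Fo[OF fwd]] k(2) \<open>j < Fo (Suc (Max K))\<close> by simp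
      with kn show ?thesis using Suc_leI by blast
    next
      case bwd
      then have "larr (pword q) j (Fo (Max K))"
        using larr_suffix[OF larr_Fo[OF bwd]] k(2) \<open>j < Fo (Suc (Max K))\<close> by simp
      with k(1) show ?thesis by blast
    qed
  qed
qed

definition lift :: "nat \<Rightarrow> nat" where
  "lift j = (SOME i. i \<le> n \<and> larr (pword q) j (Fo i))"

lemma lift_spec: "j \<le> m \<Longrightarrow> lift j \<le> n \<and> larr (pword q) j (Fo (lift j))"
  unfolding lift_def using ex_larr_to_image[of j] by (rule someI_ex) auto

definition push :: "nat \<Rightarrow> nat \<Rightarrow> 'm \<Rightarrow> 'm" where
  "push a i h = Comp C (pmor q (a, Fo i)) h"

lemma push_carrier:
  assumes i: "i \<le> n" and a: "larr (pword q) a (Fo i)" and h: "h \<in> hom C c (pobj q a)"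
  shows "(i, push a i h) \<in> track_carrier C p c"
proof -
  have "push a i h \<in> hom C c (pobj q (Fo i))"
    unfolding push_def by (rule cat_comp_in_hom[OF cat h path_mor[OF q a]])
  with i show ?thesis by (simp add: pobj_Fo)
qed

lemma push_id: "i \<le> n \<Longrightarrow> h \<in> hom C c (pobj q (Fo i)) \<Longrightarrow> push (Fo i) i h = h"
  unfolding push_def using path_id[OF q Fo_le_length] cat_id_left[OF cat] by simp

lemma push_step:
  assumes ij: "larr (pword p) i j" and a: "larr (pword q) a (Fo i)" and h: "h \<in> hom C c (pobj q a)"
  shows "((i, push a i h), (j, push a j h)) \<in> track_step C p c"
proof -
  have "Comp C (pmor p (i, j)) (push a i h) = push a j h"
    using path_comp_assoc[OF cat q a larr_Fo[OF ij] h] pmor_Fo[OF ij] by (simp add: push_def)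
  then show ?thesis
    using track_stepI[OF push_carrier[OF _ a h] ij] larr_le_length[OF ij] by simp
qed

lemma push_related:
  assumes i: "i \<le> n" and i': "i' \<le> n"
    and a: "larr (pword q) a (Fo i)" and a': "larr (pword q) a (Fo i')"
    and h: "h \<in> hom C c (pobj q a)"
  shows "((i, push a i h), (i', push a i' h)) \<in> track_rel C p c"
proof -
  have "((i, push a i h), (i', push a i' h)) \<in> track_rel C p c"
    if "i \<le> i'" "i' \<le> n" "larr (pword q) a (Fo i)" "larr (pword q) a (Fo i')" for i i'
    using that(1,2)
  proof (induction i' rule: dec_induct)
    case base
    show ?case by (simp add: track_rel_def)
  next
    case (step k)
    then have "k < n" by simp
    have "Fo i \<le> Fo k" "Fo k \<le> Fo i'" "Fo i \<le> Fo (Suc k)" "Fo (Suc k) \<le> Fo i'"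
      using Fo_mono step that(2) by auto
    then have "larr (pword q) a (Fo k)" "larr (pword q) a (Fo (Suc k))"
      using larr_between[OF that(3,4)] by auto
    with \<open>k < n\<close> have "((k, push a k h), (Suc k, push a (Suc k) h)) \<in> track_rel C p c"
      by (cases rule: larr_adjacent_cases)
        (auto intro: track_step_in_rel track_rel_sym push_step[OF _ _ h])
    with step show ?case by (auto intro: track_rel_trans)
  qed
  with i i' a a' show ?thesis by (metis nat_le_linear track_rel_sym)
qed

definition image_rep :: "nat \<times> 'm \<Rightarrow> nat \<times> 'm" where
  "image_rep = (\<lambda>(i, h). (Fo i, h))"

definition lift_rep :: "nat \<times> 'm \<Rightarrow> nat \<times> 'm" where
  "lift_rep = (\<lambda>(j, h). (lift j, push j (lift j) h))"

lemma image_rep_carrier: "x \<in> track_carrier C p c \<Longrightarrow> image_rep x \<in> track_carrier C q c"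
  by (cases x) (auto simp: image_rep_def pobj_Fo Fo_le_length)

lemma image_rep_step: "(x, y) \<in> track_step C p c \<Longrightarrow> (image_rep x, image_rep y) \<in> track_rel C q c"
proof (elim track_stepE)
  fix i j h assume x: "x = (i, h)" and y: "y = (j, Comp C (pmor p (i, j)) h)"
    and ih: "(i, h) \<in> track_carrier C p c" and ij: "larr (pword p) i j"
  have "(Fo i, h) \<in> track_carrier C q c" using image_rep_carrier[OF ih] by (simp add: image_rep_def)
  from track_stepI[OF this larr_Fo[OF ij]] show "(image_rep x, image_rep y) \<in> track_rel C q c"
    using x y pmor_Fo[OF ij] by (simp add: image_rep_def track_step_in_rel)
qed

lemma image_rep_precomp: "image_rep (precomp C f x) = precomp C f (image_rep x)"
  by (cases x) (simp add: image_rep_def precomp_def)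

lemma lift_rep_carrier: "y \<in> track_carrier C q c \<Longrightarrow> lift_rep y \<in> track_carrier C p c"
proof (cases y)
  case (Pair j h)
  assume "y \<in> track_carrier C q c"
  with Pair have "j \<le> m" "h \<in> hom C c (pobj q j)" by simp_all
  with Pair show ?thesis using push_carrier[of "lift j" j h c] lift_spec[of j] by (simp add: lift_rep_def)
qed

lemma lift_rep_step: "(x, y) \<in> track_step C q c \<Longrightarrow> (lift_rep x, lift_rep y) \<in> track_rel C p c"
proof (elim track_stepE)
  fix j j' h assume x: "x = (j, h)" and y: "y = (j', Comp C (pmor q (j, j')) h)"
    and "(j, h) \<in> track_carrier C q c" and jj': "larr (pword q) j j'"
  then have h: "h \<in> hom C c (pobj q j)" and j: "j \<le> m" by simp_all
  have l: "lift j \<le> n" "larr (pword q) j (Fo (lift j))"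
    and l': "lift j' \<le> n" "larr (pword q) j' (Fo (lift j'))"
    using lift_spec[OF j] lift_spec larr_le_length[OF jj'] by auto
  have "push j' (lift j') (Comp C (pmor q (j, j')) h) = push j (lift j') h"
    unfolding push_def by (rule path_comp_assoc[OF cat q jj' l'(2) h])
  moreover have "((lift j, push j (lift j) h), (lift j', push j (lift j') h)) \<in> track_rel C p c"
    by (rule push_related[OF l(1) l'(1) l(2) larr_trans[OF jj' l'(2)] h])
  ultimately show "(lift_rep x, lift_rep y) \<in> track_rel C p c"
    by (simp add: x y lift_rep_def)
qed

lemma lift_rep_precomp:
  assumes f: "f \<in> Mor C" and y: "y \<in> track_carrier C q (Cod C f)"
  shows "lift_rep (precomp C f y) = precomp C f (lift_rep y)"
proof (cases y)
  case (Pair j h)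
  with y have "h \<in> hom C (Cod C f) (pobj q j)" "larr (pword q) j (Fo (lift j))"
    using lift_spec by simp_all
  moreover have "f \<in> hom C (Dom C f) (Cod C f)" using f by (simp add: hom_def)
  ultimately show ?thesis
    using cat_comp_assoc[OF cat _ _ path_mor[OF q]] Pair by (simp add: lift_rep_def precomp_def push_def)
qed

lemma lift_rep_image_rep:
  assumes "i \<le> n" "h \<in> hom C c (pobj p i)"
  shows "(lift_rep (image_rep (i, h)), (i, h)) \<in> track_rel C p c"
proof -
  have h: "h \<in> hom C c (pobj q (Fo i))" using assms by (simp add: pobj_Fo)
  have "lift (Fo i) \<le> n" "larr (pword q) (Fo i) (Fo (lift (Fo i)))"
    using lift_spec Fo_le_length assms(1) by auto
  from push_related[OF this(1) assms(1) this(2) larr_refl[OF Fo_le_length] h] assms(1)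
  show ?thesis using push_id[OF assms(1) h] by (simp add: image_rep_def lift_rep_def)
qed

lemma image_rep_lift_rep: "y \<in> track_carrier C q c \<Longrightarrow> (image_rep (lift_rep y), y) \<in> track_rel C q c"
proof (cases y)
  case (Pair j h)
  assume "y \<in> track_carrier C q c"
  with Pair have "(j, h) \<in> track_carrier C q c" "j \<le> m" by simp_all
  then have "((j, h), (Fo (lift j), Comp C (pmor q (j, Fo (lift j))) h)) \<in> track_step C q c"
    using lift_spec by (intro track_stepI) simp_all
  then show ?thesis
    using Pair by (auto simp: image_rep_def lift_rep_def push_def intro: track_rel_sym track_step_in_rel)
qed

lemma aut_iso_track: "aut_iso C (track C p) (track C q)"
proof (rule aut_iso_track_mapI)
  show "aut_hom C (track C p) (track C q) (track_map C q image_rep)"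
    by (rule aut_hom_track_map[OF cat p q image_rep_carrier image_rep_step image_rep_precomp])
      (simp_all add: image_rep_def F_bot F_top pobj_bot pobj_top track_rel_def)
  show "aut_hom C (track C q) (track C p) (track_map C p lift_rep)"
    by (rule aut_hom_track_map[OF cat q p lift_rep_carrier lift_rep_step lift_rep_precomp])
      (use lift_rep_image_rep[of 0 "Id C (pobj p 0)"] lift_rep_image_rep[of n "Id C (pobj p n)"] in
        \<open>simp_all add: image_rep_def F_bot F_top pobj_bot pobj_top cat_id_in_hom[OF cat path_obj[OF p]]\<close>)
next
  fix c x assume "x \<in> track_carrier C p c"
  then show "(lift_rep (image_rep x), x) \<in> track_rel C p c" by (cases x) (simp add: lift_rep_image_rep)
qed (fact image_rep_step lift_rep_step image_rep_lift_rep)+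

end

lemma path_le_aut_iso:
  assumes "category C" and "path_le C p q"
  shows "aut_iso C (track C p) (track C q)"
proof -
  from assms(2) obtain Fo Fm where "path_le_witness C p q Fo Fm"
    unfolding path_le_def path_le_witness_def using assms(1) by blast
  then show ?thesis by (rule path_le_witness.aut_iso_track)
qed

theorem proposition7:
  fixes C :: "('o, 'm) dcat" and \<omega> \<psi> :: "('o, 'm) path"
  assumes "dcategory C"
    and "is_path C \<omega>" and "is_path C \<psi>"
    and "path_equiv C \<omega> \<psi>"
  shows "aut_iso C (track C \<omega>) (track C \<psi>)"
proof -
  have cat: "category C" using assms(1) unfolding dcategory_def by simp
  from assms(4) show ?thesis
    unfolding path_equiv_def
  proof (induction rule: equivclp_induct)
    case base
    show ?case by (rule aut_iso_refl)
  next
    case (step \<chi> \<chi>')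
    then have "aut_iso C (track C \<chi>) (track C \<chi>')"
      using path_le_aut_iso[OF cat] aut_iso_sym by blast
    with step.IH show ?case by (rule aut_iso_trans[OF cat])
  qed
qed

end
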